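(* Let $(Z,\delta)$ be a compact metric space and for $n\ge1$ let $X_n,Y_n$ be compact subsets of $Z$ with $X_n\cup Y_n\to Z_\infty$ in the $\delta$-Hausdorff metric. Assume that $X_n\cup Y_n$ (with the induced metric) is a geodesic space for every $n$. If $Z_\infty$ is 2-connected and $\mathrm{diam}(X_n\cap Y_n)\to0$, then $\min(\mathrm{diam}(X_n),\mathrm{diam}(Y_n))\to0$.
   Context: A compact metric space $(X,d)$ is geodesic if any two points $x,y$ are joined by an isometry $p:[0,d(x,y)]\to X$ with $p(0)=x$, $p(d(x,y))=y$. A metric space $X$ is 2-connected if $X\setminus\{x_0\}$ is connected for every $x_0\in X$. *)

theory Defs
  imports "HOL-Analysis.Analysis"
begin

definition hausdorff_distance :: "'a::metric_space set \<Rightarrow> 'a set \<Rightarrow> real" where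
  "hausdorff_distance S T =
     max (SUP x\<in>S. infdist x T) (SUP y\<in>T. infdist y S)"

definition geodesic_space :: "'a::metric_space set \<Rightarrow> bool" where
  "geodesic_space S \<longleftrightarrow>
     (\<forall>x\<in>S. \<forall>y\<in>S. \<exists>p::real \<Rightarrow> 'a.
        p ` {0..dist x y} \<subseteq> S \<and> p 0 = x \<and> p (dist x y) = y \<and>
        (\<forall>s\<in>{0..dist x y}. \<forall>t\<in>{0..dist x y}. dist (p s) (p t) = \<bar>s - t\<bar>))"

definition two_connected :: "'a::topological_space set \<Rightarrow> bool" where
  "two_connected S \<longleftrightarrow> (\<forall>x\<in>S. connected (S - {x}))"

end

theory Submission
  imports Defs "HOL-Complex_Analysis.Great_Picard"
begin

(* Suppose not. Pass to a subsequence along which diam X_n and diam Y_n stay above some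
   \<epsilon> > 0 and, for every u in Z, the distances d(u, X_n) and d(u, Y_n) converge (a diagonal
   argument over a countable dense subset of Z, these functions being 1-Lipschitz in u).
   Let A and B be the Kuratowski lower limits of X_n and Y_n. They are closed, they cover
   the Hausdorff limit Zinf, and each contains two points at distance at least \<epsilon>.
   A geodesic in X_n \<union> Y_n from a nearest point of X_n to a nearest point of Y_n has to
   cross X_n \<inter> Y_n, so every point of A \<inter> B is a limit of points of X_n \<inter> Y_n; since
   diam (X_n \<inter> Y_n) \<rightarrow> 0, A \<inter> B is at most a single point p. Then A - {p} and B - {p}
   disconnect Zinf - {p}. *)

lemma LIMSEQ_0_if_nonneg_le:
  fixes f g :: "nat \<Rightarrow> real"
  assumes "\<And>n. 0 \<le> f n" "\<And>n. f n \<le> g n" "g \<longlonglongrightarrow> 0"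
  shows "f \<longlonglongrightarrow> 0"
  using Lim_null_comparison[OF always_eventually, of f g] assms by simp

lemma compact_countable_dense_subset:
  fixes S :: "'a::metric_space set"
  assumes "compact S"
  obtains D where "countable D" "D \<subseteq> S" "S \<subseteq> closure D"
proof -
  have "\<forall>n::nat. \<exists>k. finite k \<and> k \<subseteq> S \<and> S \<subseteq> (\<Union>x\<in>k. ball x (inverse (Suc n)))"
    using seq_compact_imp_totally_bounded[OF compact_imp_seq_compact[OF assms]] by simp
  then obtain k where k: "\<And>n. finite (k n) \<and> k n \<subseteq> S \<and> S \<subseteq> (\<Union>x\<in>k n. ball x (inverse (Suc n)))"
    by metis
  show ?thesis
  proof (rule that[of "\<Union>n. k n"])
    show "countable (\<Union>n. k n)" "(\<Union>n. k n) \<subseteq> S"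
      using k by (auto simp: countable_finite)
    show "S \<subseteq> closure (\<Union>n. k n)"
    proof (clarsimp simp: closure_approachable)
      fix u and e :: real assume "u \<in> S" "e > 0"
      then obtain n where n: "inverse (real (Suc n)) < e"
        using reals_Archimedean by blast
      from k[of n] \<open>u \<in> S\<close> obtain d where "d \<in> k n" "dist d u < inverse (Suc n)"
        by auto
      with n show "\<exists>n. \<exists>d\<in>k n. dist d u < e"
        by force
    qed
  qed
qed

lemma convergent_on_closure_if_Lipschitz:
  fixes f :: "nat \<Rightarrow> 'a::metric_space \<Rightarrow> real"
  assumes lip: "\<And>n u v. \<bar>f n u - f n v\<bar> \<le> dist u v"
    and conv: "\<And>d. d \<in> D \<Longrightarrow> convergent (\<lambda>n. f n d)"
    and u: "u \<in> closure D"
  shows "convergent (\<lambda>n. f n u)"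
  unfolding Cauchy_convergent_iff[symmetric] Cauchy_def
proof (intro allI impI)
  fix e :: real assume "e > 0"
  then have "e/3 > 0"
    by simp
  then obtain d where d: "d \<in> D" "dist d u < e/3"
    using u closure_approachable by blast
  have "Cauchy (\<lambda>n. f n d)"
    using conv[OF d(1)] by (simp add: Cauchy_convergent_iff)
  then obtain M where M: "\<forall>m\<ge>M. \<forall>n\<ge>M. dist (f m d) (f n d) < e/3"
    unfolding Cauchy_def using \<open>e > 0\<close> by (meson divide_pos_pos zero_less_numeral)
  show "\<exists>M. \<forall>m\<ge>M. \<forall>n\<ge>M. dist (f m u) (f n u) < e"
  proof (intro exI allI impI)
    fix m n assume "m \<ge> M" "n \<ge> M"
    then have "\<bar>f m d - f n d\<bar> < e/3"
      using M by (auto simp: dist_real_def)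
    moreover have "\<bar>f m u - f m d\<bar> \<le> dist u d" "\<bar>f n u - f n d\<bar> \<le> dist u d"
      by (rule lip)+
    ultimately show "dist (f m u) (f n u) < e"
      using d(2) dist_commute[of d u] unfolding dist_real_def by linarith
  qed
qed

lemma infdist_convergent_subsequence:
  fixes S :: "nat \<Rightarrow> 'a::metric_space set"
  assumes "compact K" "\<And>n. S n \<subseteq> K"
  obtains r where "strict_mono r" "\<And>u. u \<in> K \<Longrightarrow> convergent (\<lambda>n. infdist u (S (r n)))"
proof -
  obtain D where D: "countable D" "D \<subseteq> K" "K \<subseteq> closure D"
    using compact_countable_dense_subset[OF assms(1)] .
  have infdist_le_diameter: "norm (infdist d (S n)) \<le> diameter K" if "d \<in> D" for d n
  proof (cases "S n = {}")
    case True
    then show ?thesis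
      using diameter_ge_0[OF compact_imp_bounded[OF assms(1)]] by (simp add: infdist_def)
  next
    case False
    then obtain s where "s \<in> S n"
      by blast
    then have "infdist d (S n) \<le> dist d s"
      by (rule infdist_le)
    also have "\<dots> \<le> diameter K"
      using that D(2) assms(2) \<open>s \<in> S n\<close>
      by (intro diameter_bounded_bound[OF compact_imp_bounded[OF assms(1)]]) auto
    finally show ?thesis
      by (simp add: infdist_nonneg)
  qed
  obtain r where r: "strict_mono r" "\<And>d. d \<in> D \<Longrightarrow> \<exists>l. (\<lambda>n. infdist d (S (r n))) \<longlonglongrightarrow> l"
    using function_convergent_subsequence[where f = "\<lambda>n d. infdist d (S n)" and M = "diameter K",
        OF D(1) infdist_le_diameter] by blast
  show ?thesis
  proof (rule that[OF r(1)])
    fix u assume "u \<in> K"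
    then show "convergent (\<lambda>n. infdist u (S (r n)))"
      using D(3) r(2) infdist_triangle_abs
      by (intro convergent_on_closure_if_Lipschitz[of "\<lambda>n u. infdist u (S (r n))" D u])
        (auto simp: convergent_def)
  qed
qed

lemma infdist_convergent_subsequence_pair:
  fixes S T :: "nat \<Rightarrow> 'a::metric_space set"
  assumes "compact K" "\<And>n. S n \<subseteq> K" "\<And>n. T n \<subseteq> K"
  obtains r where "strict_mono r"
    "\<And>u. u \<in> K \<Longrightarrow> convergent (\<lambda>n. infdist u (S (r n)))"
    "\<And>u. u \<in> K \<Longrightarrow> convergent (\<lambda>n. infdist u (T (r n)))"
proof -
  obtain r1 where r1: "strict_mono r1" "\<And>u. u \<in> K \<Longrightarrow> convergent (\<lambda>n. infdist u (S (r1 n)))"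
    using infdist_convergent_subsequence[of K S, OF assms(1,2)] by blast
  obtain r2 where r2: "strict_mono r2" "\<And>u. u \<in> K \<Longrightarrow> convergent (\<lambda>n. infdist u (T (r1 (r2 n))))"
    using infdist_convergent_subsequence[of K "\<lambda>n. T (r1 n)", OF assms(1,3)] by blast
  show ?thesis
  proof (rule that[of "r1 \<circ> r2"])
    show "strict_mono (r1 \<circ> r2)"
      using r1(1) r2(1) by (rule strict_mono_o)
    show "convergent (\<lambda>n. infdist u (S ((r1 \<circ> r2) n)))" if "u \<in> K" for u
      using convergent_subseq_convergent[OF r1(2)[OF that] r2(1)] by (simp add: o_def)
    show "convergent (\<lambda>n. infdist u (T ((r1 \<circ> r2) n)))" if "u \<in> K" for u
      using r2(2)[OF that] by simp
  qed
qed

lemma compact_infdist_attained: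
  fixes S :: "'a::metric_space set"
  assumes "compact S" "S \<noteq> {}"
  obtains s where "s \<in> S" "infdist x S = dist x s"
proof -
  have "continuous_on S (dist x)"
    by (intro continuous_intros)
  then obtain s where s: "s \<in> S" "\<forall>y\<in>S. dist x s \<le> dist x y"
    using continuous_attains_inf[OF assms] by blast
  then have "infdist x S = dist x s"
    using assms(2) by (intro antisym infdist_le) (auto simp: infdist_notempty intro!: cINF_greatest)
  with s(1) show ?thesis
    by (rule that)
qed

lemma geodesic_space_Un_crossing:
  assumes "geodesic_space (X \<union> Y)" "closed X" "closed Y" "a \<in> X" "b \<in> Y"
  obtains c where "c \<in> X \<inter> Y" "dist a c \<le> dist a b"
proof -
  let ?I = "{0..dist a b}"
  obtain p where p: "p ` ?I \<subseteq> X \<union> Y" "p 0 = a" "p (dist a b) = b"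
    and iso: "\<forall>s\<in>?I. \<forall>t\<in>?I. dist (p s) (p t) = \<bar>s - t\<bar>"
    using assms(1,4,5) unfolding geodesic_space_def by blast
  have "1-lipschitz_on ?I p"
    using iso by (intro lipschitz_onI) (auto simp: dist_real_def)
  then have "connected (p ` ?I)"
    by (intro connected_continuous_image lipschitz_on_continuous_on) auto
  moreover have "a \<in> X \<inter> p ` ?I" "b \<in> Y \<inter> p ` ?I"
    using p(2,3) assms(4,5) image_eqI[of a p 0 ?I] image_eqI[of b p "dist a b" ?I] by auto
  ultimately have "X \<inter> Y \<inter> p ` ?I \<noteq> {}"
    using p(1) assms(2,3) unfolding connected_closed by blast
  then obtain t where t: "t \<in> ?I" "p t \<in> X \<inter> Y"
    by blast
  have "dist a (p t) = t"
    using iso p(2) t(1) by force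
  with t show ?thesis
    by (intro that[of "p t"]) auto
qed

lemma two_connected_closed_cover:
  assumes "two_connected S" "closed A" "closed B" "S = A \<union> B"
    and AB: "\<And>p q. p \<in> A \<inter> B \<Longrightarrow> q \<in> A \<inter> B \<Longrightarrow> p = q"
  shows "(\<exists>a. A \<subseteq> {a}) \<or> (\<exists>b. B \<subseteq> {b})"
proof (rule ccontr)
  assume "\<not> ?thesis"
  then obtain a1 a2 b1 b2 where a: "a1 \<in> A" "a2 \<in> A" "a1 \<noteq> a2" and b: "b1 \<in> B" "b2 \<in> B" "b1 \<noteq> b2"
    by blast
  obtain p where "p \<in> S" "A \<inter> B \<subseteq> {p}"
    using AB a(1) assms(4) by blast
  then have "connected (S - {p})"
    using assms(1) unfolding two_connected_def by blast
  moreover have "A \<inter> (S - {p}) \<noteq> {}" "B \<inter> (S - {p}) \<noteq> {}"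
    using a b assms(4) by blast+
  moreover have "S - {p} \<subseteq> A \<union> B" "A \<inter> B \<inter> (S - {p}) = {}"
    using assms(4) \<open>A \<inter> B \<subseteq> {p}\<close> by auto
  ultimately show False
    using assms(2,3) unfolding connected_closed by blast
qed

lemma hausdorff_distance_sym: "hausdorff_distance S T = hausdorff_distance T S"
  unfolding hausdorff_distance_def by (rule max.commute)

lemma infdist_le_hausdorff_distance:
  fixes S T :: "'a::metric_space set"
  assumes "compact S" "compact T" "u \<in> S"
  shows "infdist u T \<le> hausdorff_distance S T"
proof -
  have "bdd_above ((\<lambda>y. infdist y T) ` S)"
    by (intro bounded_imp_bdd_above compact_imp_bounded compact_continuous_image assms continuous_intros)
  then show ?thesis
    unfolding hausdorff_distance_def using assms(3) by (metis cSUP_upper max.coboundedI1)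
qed

(* The Kuratowski lower limit, for nonempty sets: note that infdist u {} = 0. *)
definition kuratowski_liminf :: "(nat \<Rightarrow> 'a::metric_space set) \<Rightarrow> 'a set" where
  "kuratowski_liminf S = {u. (\<lambda>n. infdist u (S n)) \<longlonglongrightarrow> 0}"

lemma closed_kuratowski_liminf: "closed (kuratowski_liminf S)"
proof -
  have "(\<lambda>n. infdist u (S n)) \<longlonglongrightarrow> 0" if u: "u \<in> closure (kuratowski_liminf S)" for u
  proof (rule LIMSEQ_I)
    fix e :: real assume "e > 0"
    then have "e/2 > 0"
      by simp
    then obtain d where d: "d \<in> kuratowski_liminf S" "dist d u < e/2"
      using u closure_approachable by blast
    then have "(\<lambda>n. infdist d (S n)) \<longlonglongrightarrow> 0"
      by (simp add: kuratowski_liminf_def)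
    then obtain N where N: "\<forall>n\<ge>N. norm (infdist d (S n) - 0) < e/2"
      using LIMSEQ_D[OF _ \<open>e/2 > 0\<close>] by blast
    have "norm (infdist u (S n) - 0) < e" if "n \<ge> N" for n
    proof -
      have "infdist d (S n) < e/2"
        using N that by (simp add: abs_of_nonneg infdist_nonneg)
      then show ?thesis
        using infdist_triangle[of u "S n" d] infdist_nonneg[of u "S n"] d(2) dist_commute[of d u]
        by simp
    qed
    then show "\<exists>N. \<forall>n\<ge>N. norm (infdist u (S n) - 0) < e"
      by blast
  qed
  then show ?thesis
    unfolding kuratowski_liminf_def using closure_subset_eq by blast
qed

lemma kuratowski_liminf_mono:
  assumes "\<And>n. S n \<subseteq> T n" "\<And>n. S n \<noteq> {}"
  shows "kuratowski_liminf S \<subseteq> kuratowski_liminf T"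
proof
  fix u assume "u \<in> kuratowski_liminf S"
  then show "u \<in> kuratowski_liminf T"
    unfolding kuratowski_liminf_def mem_Collect_eq
    by (rule LIMSEQ_0_if_nonneg_le[OF infdist_nonneg infdist_mono[OF assms]])
qed

lemma kuratowski_liminf_Un_subset:
  assumes "\<And>n. S n \<noteq> {}" "\<And>n. T n \<noteq> {}"
    and "convergent (\<lambda>n. infdist u (S n))" "convergent (\<lambda>n. infdist u (T n))"
    and "u \<in> kuratowski_liminf (\<lambda>n. S n \<union> T n)"
  shows "u \<in> kuratowski_liminf S \<union> kuratowski_liminf T"
proof -
  obtain a b where a: "(\<lambda>n. infdist u (S n)) \<longlonglongrightarrow> a" and b: "(\<lambda>n. infdist u (T n)) \<longlonglongrightarrow> b"
    using assms(3,4) by (auto simp: convergent_def)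
  have "(\<lambda>n. min (infdist u (S n)) (infdist u (T n))) \<longlonglongrightarrow> min a b"
    by (rule tendsto_min[OF a b])
  moreover have "(\<lambda>n. min (infdist u (S n)) (infdist u (T n))) \<longlonglongrightarrow> 0"
    using assms(5) by (simp add: kuratowski_liminf_def infdist_Un_min assms(1,2))
  ultimately have "min a b = 0"
    by (rule LIMSEQ_unique)
  moreover have "0 \<le> a" "0 \<le> b"
    by (intro LIMSEQ_le_const[OF a] LIMSEQ_le_const[OF b] exI allI impI infdist_nonneg)+
  ultimately show ?thesis
    using a b by (auto simp: kuratowski_liminf_def min_def split: if_splits)
qed

lemma kuratowski_liminf_eq_hausdorff_limit:
  assumes "\<And>n. compact (S n)" "\<And>n. S n \<noteq> {}" "compact L" "L \<noteq> {}"
    and lim: "(\<lambda>n. hausdorff_distance (S n) L) \<longlonglongrightarrow> 0"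
  shows "kuratowski_liminf S = L"
proof
  show "L \<subseteq> kuratowski_liminf S"
  proof
    fix u assume "u \<in> L"
    then have le: "infdist u (S n) \<le> hausdorff_distance (S n) L" for n
      using infdist_le_hausdorff_distance[OF assms(3,1)] by (simp add: hausdorff_distance_sym)
    then show "u \<in> kuratowski_liminf S"
      using LIMSEQ_0_if_nonneg_le[OF infdist_nonneg le lim] by (simp add: kuratowski_liminf_def)
  qed
  show "kuratowski_liminf S \<subseteq> L"
  proof
    fix z assume z: "z \<in> kuratowski_liminf S"
    have "infdist z L \<le> infdist z (S n) + hausdorff_distance (S n) L" for n
    proof -
      obtain s where "s \<in> S n" "infdist z (S n) = dist z s"
        by (rule compact_infdist_attained[OF assms(1,2)])
      then show ?thesis
        using infdist_triangle[of z L s] infdist_le_hausdorff_distance[OF assms(1,3) \<open>s \<in> S n\<close>]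
        by (simp add: dist_commute)
    qed
    moreover have "(\<lambda>n. infdist z (S n) + hausdorff_distance (S n) L) \<longlonglongrightarrow> 0"
      using tendsto_add[OF _ lim] z by (force simp: kuratowski_liminf_def)
    ultimately have "infdist z L \<le> 0"
      by (intro LIMSEQ_le[OF tendsto_const]) auto
    then have "infdist z L = 0"
      by (simp add: antisym infdist_nonneg)
    then show "z \<in> L"
      using in_closed_iff_infdist_zero[OF compact_imp_closed[OF assms(3)] assms(4)] by simp
  qed
qed

lemma geodesic_crossing_sequence:
  assumes "\<And>n. compact (X n)" "\<And>n. compact (Y n)" "\<And>n. X n \<noteq> {}" "\<And>n. Y n \<noteq> {}"
    and "\<And>n. geodesic_space (X n \<union> Y n)"
    and "p \<in> kuratowski_liminf X" "p \<in> kuratowski_liminf Y"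
  obtains c where "\<And>n. c n \<in> X n \<inter> Y n" "c \<longlonglongrightarrow> p"
proof -
  have "\<exists>c. c \<in> X n \<inter> Y n \<and> dist p c \<le> 2 * infdist p (X n) + infdist p (Y n)" for n
  proof -
    obtain a where a: "a \<in> X n" "infdist p (X n) = dist p a"
      by (rule compact_infdist_attained[OF assms(1,3)])
    obtain b where b: "b \<in> Y n" "infdist p (Y n) = dist p b"
      by (rule compact_infdist_attained[OF assms(2,4)])
    obtain c where c: "c \<in> X n \<inter> Y n" "dist a c \<le> dist a b"
      using geodesic_space_Un_crossing[OF assms(5) compact_imp_closed[OF assms(1)]
          compact_imp_closed[OF assms(2)] a(1) b(1)] .
    have "dist p c \<le> 2 * infdist p (X n) + infdist p (Y n)"
      using dist_triangle[of p c a] dist_triangle3[of a b p] a(2) b(2) c(2) by linarith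
    with c(1) show ?thesis
      by blast
  qed
  then have "\<forall>n. \<exists>c. c \<in> X n \<inter> Y n \<and> dist p c \<le> 2 * infdist p (X n) + infdist p (Y n)"
    by blast
  then obtain c where c: "\<And>n. c n \<in> X n \<inter> Y n"
    and near: "\<And>n. dist p (c n) \<le> 2 * infdist p (X n) + infdist p (Y n)"
    by (metis choice)
  have "(\<lambda>n. 2 * infdist p (X n) + infdist p (Y n)) \<longlonglongrightarrow> 0"
    using assms(6,7) unfolding kuratowski_liminf_def mem_Collect_eq
    by (intro tendsto_add_zero tendsto_mult_right_zero)
  then have "(\<lambda>n. dist p (c n)) \<longlonglongrightarrow> 0"
    by (rule LIMSEQ_0_if_nonneg_le[OF zero_le_dist near])
  then have "c \<longlonglongrightarrow> p"
    by (subst tendsto_dist_iff) (simp add: dist_commute)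
  with c show ?thesis
    by (rule that)
qed

lemma geodesic_kuratowski_liminf_Int_unique:
  assumes "\<And>n. compact (X n)" "\<And>n. compact (Y n)" "\<And>n. X n \<noteq> {}" "\<And>n. Y n \<noteq> {}"
    and "\<And>n. geodesic_space (X n \<union> Y n)"
    and "(\<lambda>n. diameter (X n \<inter> Y n)) \<longlonglongrightarrow> 0"
    and "p \<in> kuratowski_liminf X \<inter> kuratowski_liminf Y" "q \<in> kuratowski_liminf X \<inter> kuratowski_liminf Y"
  shows "p = q"
proof -
  obtain c where c: "\<And>n. c n \<in> X n \<inter> Y n" "c \<longlonglongrightarrow> p"
    using geodesic_crossing_sequence[of X Y, OF assms(1-5)] assms(7) by blast
  obtain c' where c': "\<And>n. c' n \<in> X n \<inter> Y n" "c' \<longlonglongrightarrow> q"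
    using geodesic_crossing_sequence[of X Y, OF assms(1-5)] assms(8) by blast
  have "dist (c n) (c' n) \<le> diameter (X n \<inter> Y n)" for n
    using c(1) c'(1) by (intro diameter_bounded_bound compact_imp_bounded compact_Int assms(1,2))
  then have "dist p q \<le> 0"
    by (intro LIMSEQ_le[OF tendsto_dist[OF c(2) c'(2)] assms(6)]) auto
  then show "p = q"
    by simp
qed

lemma kuratowski_liminf_not_subsingleton:
  fixes S :: "nat \<Rightarrow> 'a::metric_space set"
  assumes "compact K" "\<And>n. S n \<subseteq> K" "\<And>n. compact (S n)"
    and "\<epsilon> > 0" "\<And>n. \<epsilon> \<le> diameter (S n)"
    and conv: "\<And>u. u \<in> K \<Longrightarrow> convergent (\<lambda>n. infdist u (S n))"
  shows "\<nexists>a. kuratowski_liminf S \<subseteq> {a}"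
proof -
  have "S n \<noteq> {}" for n
    using assms(4) assms(5)[of n] by auto
  then obtain a b where ab: "\<And>n. a n \<in> S n \<and> b n \<in> S n \<and> dist (a n) (b n) = diameter (S n)"
    using diameter_compact_attained[OF assms(3)] by metis
  have "(a n, b n) \<in> K \<times> K" for n
    using ab assms(2) by blast
  then obtain l r where "l \<in> K \<times> K" "strict_mono r" and lim: "((\<lambda>n. (a n, b n)) \<circ> r) \<longlonglongrightarrow> l"
    using compact_Times[OF assms(1,1)] unfolding compact_def by meson
  obtain z z' where l: "l = (z, z')" "z \<in> K" "z' \<in> K"
    using \<open>l \<in> K \<times> K\<close> by blast
  have az: "(\<lambda>n. a (r n)) \<longlonglongrightarrow> z" and bz': "(\<lambda>n. b (r n)) \<longlonglongrightarrow> z'"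
    using tendsto_fst[OF lim] tendsto_snd[OF lim] l(1) by (simp_all add: o_def)
  have in_liminf: "y \<in> kuratowski_liminf S"
    if y: "y \<in> K" "(\<lambda>n. s (r n)) \<longlonglongrightarrow> y" and s: "\<And>n. s n \<in> S n" for y s
  proof -
    obtain m where m: "(\<lambda>n. infdist y (S n)) \<longlonglongrightarrow> m"
      using conv[OF y(1)] by (auto simp: convergent_def)
    have "(\<lambda>n. dist y (s (r n))) \<longlonglongrightarrow> 0"
      using tendsto_dist[OF tendsto_const y(2), of y] by simp
    then have "(\<lambda>n. infdist y (S (r n))) \<longlonglongrightarrow> 0"
      by (rule LIMSEQ_0_if_nonneg_le[OF infdist_nonneg infdist_le[OF s]])
    moreover have "(\<lambda>n. infdist y (S (r n))) \<longlonglongrightarrow> m"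
      using LIMSEQ_subseq_LIMSEQ[OF m \<open>strict_mono r\<close>] by (simp add: o_def)
    ultimately show ?thesis
      using m LIMSEQ_unique by (fastforce simp: kuratowski_liminf_def)
  qed
  have "z \<in> kuratowski_liminf S" "z' \<in> kuratowski_liminf S"
    using in_liminf[OF l(2) az] in_liminf[OF l(3) bz'] ab by blast+
  moreover have "\<epsilon> \<le> dist z z'"
    using assms(5) ab by (intro LIMSEQ_le_const[OF tendsto_dist[OF az bz']]) auto
  ultimately show ?thesis
    using assms(4) by (metis dist_self linorder_not_less singletonD subsetD)
qed

lemma geodesic_split_kuratowski_liminf_subsingleton:
  fixes L :: "'a::metric_space set" and X Y :: "nat \<Rightarrow> 'a set"
  assumes "\<And>n. compact (X n)" "\<And>n. compact (Y n)" "\<And>n. X n \<noteq> {}" "\<And>n. Y n \<noteq> {}"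
    and "compact L" "L \<noteq> {}" "(\<lambda>n. hausdorff_distance (X n \<union> Y n) L) \<longlonglongrightarrow> 0"
    and "\<And>n. geodesic_space (X n \<union> Y n)" "two_connected L"
    and "(\<lambda>n. diameter (X n \<inter> Y n)) \<longlonglongrightarrow> 0"
    and "\<And>u. u \<in> L \<Longrightarrow> convergent (\<lambda>n. infdist u (X n))"
    and "\<And>u. u \<in> L \<Longrightarrow> convergent (\<lambda>n. infdist u (Y n))"
  shows "(\<exists>a. kuratowski_liminf X \<subseteq> {a}) \<or> (\<exists>b. kuratowski_liminf Y \<subseteq> {b})"
proof (rule two_connected_closed_cover[OF assms(9) closed_kuratowski_liminf closed_kuratowski_liminf])
  have L: "kuratowski_liminf (\<lambda>n. X n \<union> Y n) = L"
    using assms(1-7) by (intro kuratowski_liminf_eq_hausdorff_limit) auto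
  have "kuratowski_liminf X \<subseteq> L" "kuratowski_liminf Y \<subseteq> L"
    unfolding L[symmetric] using assms(3,4) by (intro kuratowski_liminf_mono; blast)+
  moreover have "L \<subseteq> kuratowski_liminf X \<union> kuratowski_liminf Y"
    using kuratowski_liminf_Un_subset[of X Y, OF assms(3,4)] assms(11,12) L by blast
  ultimately show "L = kuratowski_liminf X \<union> kuratowski_liminf Y"
    by blast
  show "p = q" if "p \<in> kuratowski_liminf X \<inter> kuratowski_liminf Y"
    "q \<in> kuratowski_liminf X \<inter> kuratowski_liminf Y" for p q
    by (rule geodesic_kuratowski_liminf_Int_unique[OF assms(1-4,8,10) that])
qed

lemma not_tendsto_0_subsequence:
  fixes f :: "nat \<Rightarrow> real"
  assumes "\<not> f \<longlonglongrightarrow> 0"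
  obtains \<epsilon> and r :: "nat \<Rightarrow> nat" where "\<epsilon> > 0" "strict_mono r" "\<And>n. \<epsilon> \<le> \<bar>f (r n)\<bar>"
proof -
  have "\<not> (\<forall>\<epsilon>>0. \<exists>N. \<forall>n\<ge>N. \<bar>f n\<bar> < \<epsilon>)"
    using assms by (simp add: LIMSEQ_iff)
  then obtain \<epsilon> where "\<epsilon> > 0" "\<forall>N. \<exists>n\<ge>N. \<epsilon> \<le> \<bar>f n\<bar>"
    by (meson not_le)
  then have "infinite {n. \<epsilon> \<le> \<bar>f n\<bar>}"
    by (simp add: infinite_nat_iff_unbounded_le)
  then obtain r :: "nat \<Rightarrow> nat" where "strict_mono r" "\<forall>n. r n \<in> {n. \<epsilon> \<le> \<bar>f n\<bar>}"
    using infinite_enumerate[OF \<open>infinite _\<close>] by blast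
  then show ?thesis
    using that[of \<epsilon> r] \<open>\<epsilon> > 0\<close> by simp
qed

theorem lemma5p5:
  fixes Z Zinf :: "'a::metric_space set"
    and X Y :: "nat \<Rightarrow> 'a set"
  assumes "compact Z"
    and "\<And>n. compact (X n)" and "\<And>n. X n \<subseteq> Z"
    and "\<And>n. compact (Y n)" and "\<And>n. Y n \<subseteq> Z"
    and "\<And>n. X n \<union> Y n \<noteq> {}"
    and "compact Zinf" and "Zinf \<subseteq> Z" and "Zinf \<noteq> {}"
    and "(\<lambda>n. hausdorff_distance (X n \<union> Y n) Zinf) \<longlonglongrightarrow> 0"
    and "\<And>n. geodesic_space (X n \<union> Y n)"
    and "two_connected Zinf"
    and "(\<lambda>n. diameter (X n \<inter> Y n)) \<longlonglongrightarrow> 0"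
  shows "(\<lambda>n. min (diameter (X n)) (diameter (Y n))) \<longlonglongrightarrow> 0"
proof (rule ccontr)
  assume "\<not> ?thesis"
  then obtain \<epsilon> and r0 :: "nat \<Rightarrow> nat" where "\<epsilon> > 0" "strict_mono r0"
    and \<epsilon>: "\<And>n. \<epsilon> \<le> \<bar>min (diameter (X (r0 n))) (diameter (Y (r0 n)))\<bar>"
    using not_tendsto_0_subsequence by blast
  obtain r where r: "strict_mono r"
    and conv_r: "\<And>u. u \<in> Z \<Longrightarrow> convergent (\<lambda>n. infdist u (X (r0 (r n))))"
      "\<And>u. u \<in> Z \<Longrightarrow> convergent (\<lambda>n. infdist u (Y (r0 (r n))))"
    using infdist_convergent_subsequence_pair[of Z "\<lambda>n. X (r0 n)" "\<lambda>n. Y (r0 n)"] assms(1,3,5)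
    by blast
  define R where "R = r0 \<circ> r"
  have R: "strict_mono R"
    unfolding R_def using \<open>strict_mono r0\<close> r by (rule strict_mono_o)
  have diam: "\<epsilon> \<le> diameter (X (R n))" "\<epsilon> \<le> diameter (Y (R n))" for n
    using \<epsilon>[of "r n"] diameter_ge_0[OF compact_imp_bounded[OF assms(2)]]
      diameter_ge_0[OF compact_imp_bounded[OF assms(4)]] by (auto simp: R_def)
  have conv: "convergent (\<lambda>n. infdist u (X (R n)))" "convergent (\<lambda>n. infdist u (Y (R n)))"
    if "u \<in> Z" for u
    using conv_r[OF that] by (simp_all add: R_def)
  have nonempty: "X (R n) \<noteq> {}" "Y (R n) \<noteq> {}" for n
    using diam[of n] \<open>\<epsilon> > 0\<close> by auto
  have "(\<lambda>n. hausdorff_distance (X (R n) \<union> Y (R n)) Zinf) \<longlonglongrightarrow> 0"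
    "(\<lambda>n. diameter (X (R n) \<inter> Y (R n))) \<longlonglongrightarrow> 0"
    using LIMSEQ_subseq_LIMSEQ[OF assms(10) R] LIMSEQ_subseq_LIMSEQ[OF assms(13) R]
    by (simp_all add: o_def)
  then have "(\<exists>a. kuratowski_liminf (\<lambda>n. X (R n)) \<subseteq> {a}) \<or> (\<exists>b. kuratowski_liminf (\<lambda>n. Y (R n)) \<subseteq> {b})"
    using conv assms(8)
    by (intro geodesic_split_kuratowski_liminf_subsingleton[OF assms(2,4) nonempty assms(7,9) _ assms(11,12)]) auto
  moreover have "\<nexists>a. kuratowski_liminf (\<lambda>n. X (R n)) \<subseteq> {a}"
    by (rule kuratowski_liminf_not_subsingleton[OF assms(1,3,2) \<open>\<epsilon> > 0\<close> diam(1) conv(1)])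
  moreover have "\<nexists>b. kuratowski_liminf (\<lambda>n. Y (R n)) \<subseteq> {b}"
    by (rule kuratowski_liminf_not_subsingleton[OF assms(1,5,4) \<open>\<epsilon> > 0\<close> diam(2) conv(2)])
  ultimately show False
    by blast
qed

end
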